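(* For $n>2$, there is no non-trivial antisymmetric real bilinear map $b:\mathbb{C}^{n+1}\times\mathbb{C}^{n+1}\to\mathbb{C}^{n+1}$ that is equivariant under ${\sf SO}(1,n)$, i.e. satisfies $b(Au,Av)=Ab(u,v)$ for all $A\in{\sf SO}(1,n)$.
   Context: ${\sf SO}(1,n)$ is the special orthogonal group of the Lorentz form $-x_0^2+x_1^2+\dots+x_n^2$ on $\mathbb{R}^{n+1}$, acting on $\mathbb{C}^{n+1}=\mathbb{R}^{n+1}+i\mathbb{R}^{n+1}$ diagonally by $A(x+iy)=Ax+iAy$. *)

theory Defs
  imports "HOL-Analysis.Analysis"
begin

text \<open>Coordinates of R^(n+1) are indexed by a finite type 'n with CARD('n) = n+1;
  the distinguished index t0 plays the role of the time coordinate x_0.\<close>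

definition lorentz_form :: "'n::finite \<Rightarrow> real^'n^'n" where
  "lorentz_form t0 = (\<chi> i j. if i = j then (if i = t0 then -1 else 1) else 0)"

definition SO1n :: "'n::finite \<Rightarrow> (real^'n^'n) set" where
  "SO1n t0 = {A. transpose A ** lorentz_form t0 ** A = lorentz_form t0 \<and> det A = 1}"

text \<open>Diagonal action on C^(n+1) = R^(n+1) + i R^(n+1): A(x+iy) = Ax + iAy.\<close>
definition cact :: "real^'n^'n \<Rightarrow> complex^'n \<Rightarrow> complex^'n" where
  "cact A z = (\<chi> i. Complex ((A *v (\<chi> j. Re (z$j)))$i) ((A *v (\<chi> j. Im (z$j)))$i))"

end

theory Submission
  imports Defs
begin

text \<open>Only the diagonal sign matrices with two entries -1 are needed. Such a matrix lies in
  SO(1,n) and acts on the coordinate direction e_i by a sign s_i, so an equivariant bilinear b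
  satisfies s_j s_k b(e_j,e_k)_i = s_i b(e_j,e_k)_i. Given i, j, k, a fourth index m outside
  them (this needs n+1 > 3) lets one choose the two flipped coordinates so that s_j s_k = -s_i,
  forcing every coordinate of every b(e_j,e_k) to vanish.\<close>

definition flip_sign :: "'n set \<Rightarrow> 'n \<Rightarrow> real" where
  "flip_sign S i = (if i \<in> S then -1 else 1)"

definition sign_matrix :: "'n::finite set \<Rightarrow> real^'n^'n" where
  "sign_matrix S = (\<chi> i j. if i = j then flip_sign S i else 0)"

lemma flip_sign_sq [simp]: "flip_sign S i * flip_sign S i = 1"
  by (simp add: flip_sign_def)

lemma flip_sign_nonzero [simp]: "flip_sign S i \<noteq> 0"
  by (simp add: flip_sign_def)

lemma sign_matrix_mult_left: "(sign_matrix S ** M) $ i $ j = flip_sign S i * M $ i $ j"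
  by (simp add: matrix_matrix_mult_def sign_matrix_def if_distrib[where f="\<lambda>a. a * _"]
      cong: if_cong)

lemma sign_matrix_mult_right: "(M ** sign_matrix S) $ i $ j = M $ i $ j * flip_sign S j"
  by (simp add: matrix_matrix_mult_def sign_matrix_def if_distrib[where f="\<lambda>a. _ * a"]
      cong: if_cong)

lemma transpose_sign_matrix: "transpose (sign_matrix S) = sign_matrix S"
  by (simp add: transpose_def sign_matrix_def vec_eq_iff)

lemma sign_matrix_mulvec: "(sign_matrix S *v x) $ i = flip_sign S i * x $ i"
  by (simp add: matrix_vector_mult_def sign_matrix_def if_distrib[where f="\<lambda>a. a * _"]
      cong: if_cong)

lemma det_sign_matrix: "det (sign_matrix (S :: 'n::finite set)) = (-1) ^ card S"
proof -
  have "det (sign_matrix S) = (\<Prod>i\<in>UNIV. flip_sign S i)"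
    by (subst det_diagonal) (auto simp: sign_matrix_def)
  also have "\<dots> = (\<Prod>i\<in>S. -1)"
    by (simp add: flip_sign_def prod.If_cases)
  finally show ?thesis by simp
qed

lemma sign_matrix_preserves_lorentz_form:
  "transpose (sign_matrix S) ** lorentz_form t0 ** sign_matrix S = lorentz_form t0"
proof -
  have "flip_sign S i * lorentz_form t0 $ i $ j * flip_sign S j = lorentz_form t0 $ i $ j" for i j
    by (cases "i = j") (auto simp: lorentz_form_def)
  then show ?thesis
    by (simp add: vec_eq_iff transpose_sign_matrix sign_matrix_mult_left sign_matrix_mult_right)
qed

lemma sign_matrix_in_SO1n: "even (card S) \<Longrightarrow> sign_matrix S \<in> SO1n t0"
  by (simp add: SO1n_def sign_matrix_preserves_lorentz_form det_sign_matrix)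

lemma cact_sign_matrix: "cact (sign_matrix S) z = (\<chi> i. of_real (flip_sign S i) * z $ i)"
  by (simp add: cact_def sign_matrix_mulvec vec_eq_iff complex_eq_iff)

lemma cact_sign_matrix_axis: "cact (sign_matrix S) (axis j c) = flip_sign S j *\<^sub>R axis j c"
  by (auto simp: cact_sign_matrix vec_eq_iff axis_def scaleR_conv_of_real[where 'a=complex])

lemma sign_equivariant_bilinear_component_eq_0:
  fixes b :: "complex^'n \<Rightarrow> complex^'n \<Rightarrow> complex^'n"
  assumes "bilinear b"
    and equivariant: "\<And>u v. b (cact (sign_matrix S) u) (cact (sign_matrix S) v)
                          = cact (sign_matrix S) (b u v)"
    and "flip_sign S j * flip_sign S k = - flip_sign S i"
  shows "b (axis j c) (axis k d) $ i = 0"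
proof -
  have "(flip_sign S j * flip_sign S k) *\<^sub>R b (axis j c) (axis k d)
      = cact (sign_matrix S) (b (axis j c) (axis k d))"
    using equivariant[of "axis j c" "axis k d"]
    by (simp add: cact_sign_matrix_axis bilinear_lmul[OF assms(1)] bilinear_rmul[OF assms(1)]
        mult.commute)
  then have "- flip_sign S i *\<^sub>R b (axis j c) (axis k d) $ i
      = of_real (flip_sign S i) * b (axis j c) (axis k d) $ i"
    by (simp add: assms(3) cact_sign_matrix vec_eq_iff)
  then show ?thesis
    by (simp add: scaleR_conv_of_real)
qed

lemma obtain_sign_pair_mismatch:
  fixes i j k :: "'n::finite"
  assumes "CARD('n) > 3"
  obtains S where "card S = 2" "flip_sign S j * flip_sign S k = - flip_sign S i"
proof -
  have "card {i, j, k} \<le> 3"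
    by (auto simp: card_insert_if)
  with assms have "{i, j, k} \<noteq> UNIV"
    by auto
  then obtain m where m: "m \<notin> {i, j, k}"
    by blast
  define t where "t = (if j = k then i else if i = j then k else if i = k then j else i)"
  have "t \<noteq> m" "flip_sign {t, m} j * flip_sign {t, m} k = - flip_sign {t, m} i"
    using m by (auto simp: t_def flip_sign_def)
  then show thesis
    by (intro that[of "{t, m}"]) auto
qed

lemma bilinear_zero_fun: "bilinear (\<lambda>u v. 0)"
  by (simp add: bilinear_def linear_zero)

theorem fact2p3:
  fixes b :: "complex^'n \<Rightarrow> complex^'n \<Rightarrow> complex^'n" and t0 :: "'n::finite"
  assumes "CARD('n) > 3"
    and "bilinear b"
    and "\<And>u v. b u v = - b v u"
    and "\<And>A u v. A \<in> SO1n t0 \<Longrightarrow> b (cact A u) (cact A v) = cact A (b u v)"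
  shows "b = (\<lambda>u v. 0)"
proof (rule bilinear_eq_stdbasis[OF assms(2) bilinear_zero_fun])
  have "b (axis j c) (axis k d) $ i = 0" for i j k c d
  proof -
    obtain S where "card S = 2" "flip_sign S j * flip_sign S k = - flip_sign S i"
      using obtain_sign_pair_mismatch[OF assms(1)] .
    moreover from \<open>card S = 2\<close> have "sign_matrix S \<in> SO1n t0"
      by (simp add: sign_matrix_in_SO1n)
    ultimately show ?thesis
      by (intro sign_equivariant_bilinear_component_eq_0[OF assms(2), of S] assms(4))
  qed
  then show "b u v = 0" if "u \<in> Basis" "v \<in> Basis" for u v
    using that by (auto simp: Basis_vec_def) (simp add: vec_eq_iff)
qed

end
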